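(* Let $a,b,d>0$, let $c_-$ be the unique negative zero of $Q(x)=4ax^3-b^2x^2-18abd\,x+27a^2d^2+4db^3$, let $c^*=-\sqrt{3bd}$, and assume $c\in(c_-,c^* )$. Let $\phi(x)=\frac{ax^3+bx^2+cx+d}{x^3}$ ($x>0$), $x_m=\frac{-c-\sqrt{c^2-3bd}}{b}$, $x_M=\frac{-c+\sqrt{c^2-3bd}}{b}$. Assume $\phi$ has a unique equilibrium $\overline{t}$ with $\overline{t}<x_m$, and let $\{t_n\}_{n\ge0}$ be a positive solution of $t_{n+1}=\phi(t_n)$. Let $c_1^*=-2\sqrt{bd}$; when $c>c_1^*$ let $\eta=\frac{-dx_m}{cx_m+2d}$ (the unique $\eta>x_M$ with $\phi(\eta)=\phi(x_m)$). Let $I=[\phi(x_m),\phi^2(x_m)]$. \begin{description} \item[(a)] Under the hypothesis (H): "either $c\leq c_1^*$, or $c>c_1^*$ and $\phi^2(x_m)\leq\eta$", the interval $I$ is invariant, i.e. $\phi(I)\subseteq I$. Moreover, if $c\leq c_1^*$ then every positive solution eventually enters $I$ (and stays there). \item[(b)] If $\phi$ has no 2-cycle, then $\{t_n\}$ converges to $\overline{t}$. \item[(c)] Assume $\phi$ has exactly one 2-cycle $(p,q)$ with $p<\overline{t}<q\leq x_m$. Let $\mathcal{S}=\bigcup_{n\ge0}\phi^{-n}(\overline{t})=\{t>0:\phi^n(t)=\overline{t}\text{ for some }n\ge0\}$. If $\overline{t}<-dx_M/(cx_M+2d)$ then $\mathcal{S}=\{\overline{t}\}$. Also, if $t_0\notin\mathcal{S}$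 then $\{t_n\}$ converges to the 2-cycle $(p,q)$; otherwise it converges to $\overline{t}$. \end{description}
   Context: $x_m<x_M$ are the local minimum and local maximum points of $\phi$; $\phi^n$ denotes the $n$-th iterate. An equilibrium is $t>0$ with $\phi(t)=t$. A 2-cycle is a pair $(p,q)$ of positive numbers with $p\ne q$, $\phi(p)=q$, $\phi(q)=p$. A positive solution is a sequence with $t_0>0$ and $t_{n+1}=\phi(t_n)$. The sequence $\{t_n\}$ converges to the 2-cycle $(p,q)$ if one of the subsequences $\{t_{2n}\}$, $\{t_{2n+1}\}$ converges to $p$ and the other to $q$. *)

theory Defs
  imports Complex_Main
begin

definition phi :: "real \<Rightarrow> real \<Rightarrow> real \<Rightarrow> real \<Rightarrow> real \<Rightarrow> real" where
  "phi a b c d x = (a * x ^ 3 + b * x ^ 2 + c * x + d) / x ^ 3"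

definition Qpoly :: "real \<Rightarrow> real \<Rightarrow> real \<Rightarrow> real \<Rightarrow> real" where
  "Qpoly a b d x = 4 * a * x ^ 3 - b ^ 2 * x ^ 2 - 18 * a * b * d * x + 27 * a ^ 2 * d ^ 2 + 4 * d * b ^ 3"

definition cminus :: "real \<Rightarrow> real \<Rightarrow> real \<Rightarrow> real" where
  "cminus a b d = (THE x. x < 0 \<and> Qpoly a b d x = 0)"

definition xm :: "real \<Rightarrow> real \<Rightarrow> real \<Rightarrow> real" where
  "xm b c d = (- c - sqrt (c ^ 2 - 3 * b * d)) / b"

definition xM :: "real \<Rightarrow> real \<Rightarrow> real \<Rightarrow> real" where
  "xM b c d = (- c + sqrt (c ^ 2 - 3 * b * d)) / b"

definition two_cycle :: "(real \<Rightarrow> real) \<Rightarrow> real \<Rightarrow> real \<Rightarrow> bool" where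
  "two_cycle f p q \<longleftrightarrow> p > 0 \<and> q > 0 \<and> p \<noteq> q \<and> f p = q \<and> f q = p"

definition conv_two_cycle :: "(nat \<Rightarrow> real) \<Rightarrow> real \<Rightarrow> real \<Rightarrow> bool" where
  "conv_two_cycle t p q \<longleftrightarrow>
     ((\<lambda>n. t (2 * n)) \<longlonglongrightarrow> p \<and> (\<lambda>n. t (2 * n + 1)) \<longlonglongrightarrow> q) \<or>
     ((\<lambda>n. t (2 * n)) \<longlonglongrightarrow> q \<and> (\<lambda>n. t (2 * n + 1)) \<longlonglongrightarrow> p)"

end

theory Submission
  imports Defs "HOL-Analysis.Convex" "HOL-Probability.Characteristic_Functions"
begin

text \<open>On \<open>(0, x\<^sub>m]\<close> the map \<open>\<phi>\<close> is decreasing, so as soon as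
  \<open>\<phi>\<^sup>2(x\<^sub>m) \<le> x\<^sub>m\<close> the interval \<open>I\<close> is invariant and \<open>\<phi> \<circ> \<phi>\<close> is increasing on it;
  the even and odd subsequences of an orbit in \<open>I\<close> are then monotone and converge to fixed
  points of \<open>\<phi> \<circ> \<phi>\<close>. No orbit avoids \<open>I\<close> forever: above \<open>x\<^sub>m\<close> it decreases, and its
  successive visits below \<open>\<phi>(x\<^sub>m)\<close> increase but cannot accumulate. Without two-cycles the
  limit is therefore the equilibrium \<open>tbar\<close>. Around a unique two-cycle \<open>(p, q)\<close> the equilibrium repels
  for \<open>\<phi> \<circ> \<phi>\<close>: on \<open>(p, q)\<close> one has \<open>(\<phi> \<circ> \<phi>)' = 1/K\<^sup>2\<close> with \<open>K\<close> convex, which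
  forbids \<open>\<phi> \<circ> \<phi> - id\<close> to be positive on \<open>(p, tbar)\<close> and negative on \<open>(tbar, q)\<close>.
  Invariance of \<open>I\<close> under (H) comes from the factorisation
  \<open>\<phi>(x) - \<phi>(x\<^sub>m) = d (1/x - 1/x\<^sub>m)\<^sup>2 (1/x - 1/\<eta>)\<close>.\<close>

lemma neg_if_continuous_nonzero:
  fixes F :: "real \<Rightarrow> real"
  assumes cont: "\<And>x. l < x \<Longrightarrow> x < r \<Longrightarrow> isCont F x"
    and nonzero: "\<And>x. l < x \<Longrightarrow> x < r \<Longrightarrow> F x \<noteq> 0"
    and y: "l < y" "y < r" "F y < 0" and x: "l < x" "x < r"
  shows "F x < 0"
proof (rule ccontr)
  assume "\<not> F x < 0"
  then obtain z where "min x y \<le> z" "z \<le> max x y" "F z = 0"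
    using IVT[of F y 0 x] IVT2[of F y 0 x] y x cont
    by (cases "y \<le> x") (fastforce simp: min_def max_def)+
  then show False
    using nonzero[of z] x y by auto
qed

lemma less_self_beyond_fixpoints:
  fixes g :: "real \<Rightarrow> real"
  assumes cont: "\<And>z. l < z \<Longrightarrow> isCont g z" and no_fix: "\<And>z. l < z \<Longrightarrow> g z \<noteq> z"
    and eventually_less: "\<forall>\<^sub>F x in at_top. g x < x" and x: "l < x"
  shows "g x < x"
proof -
  obtain Y where Y: "\<And>y. Y \<le> y \<Longrightarrow> g y < y"
    using eventually_less by (auto simp: eventually_at_top_linorder)
  define y where "y = max Y x"
  have "g x - x < 0"
    by (rule neg_if_continuous_nonzero[of l "y + 1" "\<lambda>z. g z - z" y x])
       (use cont no_fix Y x in \<open>auto simp: y_def intro!: continuous_intros\<close>)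
  then show ?thesis by simp
qed

lemma eventually_less_self_if_tendsto:
  fixes g :: "real \<Rightarrow> real"
  assumes "(g \<longlongrightarrow> L) at_top"
  shows "\<forall>\<^sub>F x in at_top. g x < x"
proof -
  have "\<forall>\<^sub>F x in at_top. g x < L + 1"
    using order_tendstoD(2)[OF assms] by simp
  moreover have "\<forall>\<^sub>F x in at_top. L + 1 < x" by simp
  ultimately show ?thesis by eventually_elim simp
qed

lemma mono_iteration_converges:
  fixes g :: "real \<Rightarrow> real" and e :: "nat \<Rightarrow> real"
  assumes maps: "g ` {l..u} \<subseteq> {l..u}" and mono: "mono_on {l..u} g"
    and cont: "continuous_on {l..u} g"
    and e0: "e 0 \<in> {l..u}" and e_Suc: "\<And>k. e (Suc k) = g (e k)"
  obtains L where "e \<longlonglongrightarrow> L" "L \<in> {l..u}" "g L = L" "incseq e \<or> decseq e"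
proof -
  have e_in: "e k \<in> {l..u}" for k
    by (induction k) (use e0 maps in \<open>auto simp: e_Suc image_subset_iff\<close>)
  have monotone: "incseq e \<or> decseq e"
  proof (cases "e 0 \<le> e 1")
    case True
    have "e k \<le> e (Suc k)" for k
    proof (induction k)
      case (Suc k)
      then show ?case using mono_onD[OF mono e_in e_in Suc.IH] by (simp add: e_Suc)
    qed (use True in simp)
    then show ?thesis by (simp add: incseq_SucI)
  next
    case False
    have "e (Suc k) \<le> e k" for k
    proof (induction k)
      case (Suc k)
      then show ?case using mono_onD[OF mono e_in e_in Suc.IH] by (simp add: e_Suc)
    qed (use False in simp)
    then show ?thesis by (simp add: decseq_SucI)
  qed
  obtain L where L: "e \<longlonglongrightarrow> L"
    using monotone e_in incseq_convergent[of e u] decseq_convergent[of e l]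
    by (metis atLeastAtMost_iff)
  have L_in: "L \<in> {l..u}"
    using LIMSEQ_le_const[OF L] LIMSEQ_le_const2[OF L] e_in by auto
  have "(\<lambda>k. g (e k)) \<longlonglongrightarrow> g L"
    using continuous_on_tendsto_compose[OF cont L L_in] e_in by simp
  moreover have "(\<lambda>k. g (e k)) \<longlonglongrightarrow> L"
    using LIMSEQ_Suc[OF L] e_Suc by simp
  ultimately have "g L = L" by (rule LIMSEQ_unique)
  with L L_in monotone show ?thesis using that by blast
qed

lemma exists_pos_deriv_if_increasing:
  fixes F F' :: "real \<Rightarrow> real"
  assumes "a < b" "F a < F b" and deriv: "\<And>x. a \<le> x \<Longrightarrow> x \<le> b \<Longrightarrow> DERIV F x :> F' x"
  obtains \<xi> where "a < \<xi>" "\<xi> < b" "0 < F' \<xi>"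
proof -
  from MVT2[OF \<open>a < b\<close> deriv] obtain \<xi> where \<xi>: "a < \<xi>" "\<xi> < b" "F b - F a = (b - a) * F' \<xi>"
    by blast
  then have "0 < (b - a) * F' \<xi>" using assms(2) by simp
  with \<open>a < b\<close> have "0 < F' \<xi>" by (simp add: zero_less_mult_iff)
  with \<xi> that show thesis by blast
qed

lemma deriv_nonpos_at_zero_if_neg_right:
  fixes F :: "real \<Rightarrow> real"
  assumes "DERIV F x :> l" "F x = 0" and neg_right: "\<And>y. x < y \<Longrightarrow> y < r \<Longrightarrow> F y < 0"
    and "x < r"
  shows "l \<le> 0"
proof (rule ccontr)
  assume "\<not> l \<le> 0"
  then obtain \<delta> where "\<delta> > 0" and inc: "\<forall>h>0. h < \<delta> \<longrightarrow> F x < F (x + h)"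
    using DERIV_pos_inc_right[OF assms(1)] by auto
  define h where "h = min (\<delta>/2) ((r - x)/2)"
  have "h \<le> \<delta>/2" "h \<le> (r - x)/2" unfolding h_def by (rule min.cobounded1, rule min.cobounded2)
  then have "h < \<delta>" "x + h < r" using \<open>\<delta> > 0\<close> \<open>x < r\<close> by simp_all
  moreover have "0 < h" using \<open>\<delta> > 0\<close> \<open>x < r\<close> by (simp add: h_def)
  ultimately show False using inc neg_right[of "x + h"] assms(2) by auto
qed

lemma one_less_inverse_square_iff: "0 < (k::real) \<Longrightarrow> 1 < 1 / k^2 \<longleftrightarrow> k < 1"
  by (simp add: abs_square_less_1)

section \<open>The map \<open>\<phi>\<close>\<close>

lemma phi_eq_inverse_powers: "x \<noteq> 0 \<Longrightarrow> phi a b c d x = a + b/x + c/x^2 + d/x^3"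
  unfolding phi_def by (simp add: field_simps power2_eq_square power3_eq_cube)

lemma DERIV_phi:
  assumes "x \<noteq> 0"
  shows "DERIV (phi a b c d) x :> - (b*x^2 + 2*c*x + 3*d) / x^4"
proof -
  have ev: "\<forall>\<^sub>F y in nhds x. a + b/y + c/y^2 + d/y^3 = phi a b c d y"
    using t1_space_nhds[OF assms] by (auto elim!: eventually_mono simp: phi_eq_inverse_powers)
  have "DERIV (\<lambda>y. a + b/y + c/y^2 + d/y^3) x :> - (b*x^2 + 2*c*x + 3*d) / x^4"
    using assms
    by (auto intro!: derivative_eq_intros
        simp: field_simps power2_eq_square power3_eq_cube power4_eq_xxxx)
  then show ?thesis
    using DERIV_cong_ev[OF refl ev refl] by simp
qed

lemma isCont_phi: "x \<noteq> 0 \<Longrightarrow> isCont (phi a b c d) x"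
  using DERIV_phi DERIV_isCont by blast

lemma phi_tendsto_at_top: "(phi a b c d \<longlongrightarrow> a) at_top"
proof -
  have "((\<lambda>x. a + b * inverse x + c * inverse x ^ 2 + d * inverse x ^ 3)
          \<longlongrightarrow> a + b * 0 + c * 0 ^ 2 + d * 0 ^ 3) at_top"
    by (intro tendsto_intros tendsto_inverse_0_at_top filterlim_ident)
  then have "((\<lambda>x. a + b / x + c / x^2 + d / x^3) \<longlongrightarrow> a) at_top"
    by (simp add: power_inverse divide_inverse)
  moreover have "\<forall>\<^sub>F x in at_top. a + b / x + c / x^2 + d / x^3 = phi a b c d x"
    using eventually_gt_at_top[of 0] by eventually_elim (simp add: phi_eq_inverse_powers)
  ultimately show ?thesis by (rule tendsto_cong[THEN iffD1, rotated])
qed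

lemma Qpoly_neg_root_unique:
  assumes a: "a > 0" and b: "b > 0" and d: "d > 0"
    and u: "u < 0" "Qpoly a b d u = 0" and v: "v < 0" "Qpoly a b d v = 0"
  shows "u = v"
proof (rule ccontr)
  assume "u \<noteq> v"
  define w where "w = b^2/(4*a) - u - v"
  define r1 where "r1 = -18*a*b*d - 4*a*(u * v + u * w + v * w)"
  define r0 where "r0 = 27*a^2*d^2 + 4*d*b^3 + 4*a * u * v * w"
  have division: "Qpoly a b d x = 4*a*(x-u)*(x-v)*(x-w) + r1*x + r0" for x
    unfolding Qpoly_def r1_def r0_def w_def using a
    by (simp add: field_simps power2_eq_square power3_eq_cube)
  have roots: "r1 * u + r0 = 0" "r1 * v + r0 = 0"
    using division[of u] division[of v] u v by simp_all
  then have "r1 * (u - v) = 0"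
    unfolding right_diff_distrib by linarith
  with \<open>u \<noteq> v\<close> roots have "r0 = 0" by simp
  have "0 \<le> b^2/(4*a)" using a by simp
  then have "w > 0" using u v unfolding w_def by linarith
  moreover have "u * v > 0" using u v by (simp add: mult_neg_neg)
  ultimately have "0 < 27*a^2*d^2 + 4*d*b^3 + 4*a*(u * v) * w"
    using a b d by (intro add_pos_pos) simp_all
  with \<open>r0 = 0\<close> show False
    unfolding r0_def by (simp add: algebra_simps)
qed

text \<open>\<open>c\<^sub>-\<close> is the value of \<open>c\<close> at which the numerator of \<open>\<phi>\<close> acquires a double
  root \<open>x\<^sub>0 > 0\<close>.\<close>

lemma cminus_double_root:
  assumes a: "a > 0" and b: "b > 0" and d: "d > 0"
  obtains x0 where "x0 > 0" "2*a*x0^3 + b*x0^2 = d" "cminus a b d = -(3*a*x0^2 + 2*b*x0)"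
proof -
  define K where "K = 1 + d/b"
  have K: "K \<ge> 1" "b*K = b + d" using b d by (simp_all add: K_def field_simps)
  have "0 \<le> (b*K) * (K - 1)" using K b d by simp
  moreover have "b*K^2 - b*K = (b*K) * (K - 1)" by (simp add: algebra_simps power2_eq_square)
  moreover have "0 \<le> 2*a*K^3" using a K by simp
  ultimately have "0 \<le> 2*a*K^3 + b*K^2 - d" using K(2) b by linarith
  then obtain x0 where x0: "0 \<le> x0" "2*a*x0^3 + b*x0^2 - d = 0"
    using IVT[of "\<lambda>x. 2*a*x^3 + b*x^2 - d" 0 0 K] K d by (auto intro!: continuous_intros)
  with d have "x0 > 0" by (cases "x0 = 0") auto
  have d_eq: "d = 2*a*x0^3 + b*x0^2" using x0(2) by simp
  define c0 where "c0 = -(3*a*x0^2 + 2*b*x0)"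
  have "0 < 3*a*x0^2 + 2*b*x0"
    using a b \<open>x0 > 0\<close> by (intro add_pos_pos) simp_all
  then have c0: "c0 < 0" unfolding c0_def by simp
  have Q0: "Qpoly a b d c0 = 0"
    unfolding Qpoly_def c0_def d_eq by (simp add: algebra_simps power2_eq_square power3_eq_cube)
  have "cminus a b d = c0"
    unfolding cminus_def
  proof (rule the_equality)
    show "c0 < 0 \<and> Qpoly a b d c0 = 0" using c0 Q0 by simp
  qed (use Qpoly_neg_root_unique[OF a b d _ _ c0 Q0] in blast)
  then show thesis using that[of x0] \<open>x0 > 0\<close> d_eq c0_def by simp
qed

lemma phi_numerator_pos:
  assumes a: "a > 0" and b: "b > 0" and d: "d > 0" and c: "cminus a b d < c" and x: "x > 0"
  shows "a*x^3 + b*x^2 + c*x + d > 0"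
proof -
  obtain x0 where x0: "x0 > 0" "2*a*x0^3 + b*x0^2 = d" "cminus a b d = -(3*a*x0^2 + 2*b*x0)"
    using cminus_double_root[OF a b d] by blast
  have "a*x^3 + b*x^2 + cminus a b d * x + d = (x-x0)^2 * (a*x + 2*a*x0 + b)"
    unfolding x0(3) by (simp add: x0(2)[symmetric] algebra_simps power2_eq_square power3_eq_cube)
  also have "\<dots> \<ge> 0" using a b x x0 by simp
  finally have "0 \<le> a*x^3 + b*x^2 + cminus a b d * x + d" .
  moreover have "cminus a b d * x < c * x" using c x by simp
  ultimately show ?thesis by linarith
qed

locale unique_equilibrium =
  fixes a b c d tbar :: real
  assumes a: "a > 0" and b: "b > 0" and d: "d > 0"
    and c_gt_cminus: "cminus a b d < c" and c_less: "c < - sqrt (3*b*d)"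
    and tbar_pos: "tbar > 0" and tbar_fix: "phi a b c d tbar = tbar"
    and tbar_unique: "\<forall>s>0. phi a b c d s = s \<longrightarrow> s = tbar"
    and tbar_less_m: "tbar < xm b c d"
begin

abbreviation f where "f \<equiv> phi a b c d"
abbreviation m where "m \<equiv> xm b c d"
abbreviation M where "M \<equiv> xM b c d"
abbreviation I where "I \<equiv> {f m .. f (f m)}"
abbreviation delta where "delta \<equiv> sqrt (c^2 - 3*b*d)"

lemma c_neg: "c < 0"
proof -
  have "0 \<le> sqrt (3*b*d)" using b d by simp
  then show ?thesis using c_less by linarith
qed

lemma c_sq_gt: "3*b*d < c^2"
proof -
  have "sqrt (3*b*d) < -c" using c_less by simp
  then have "(sqrt (3*b*d))^2 < (-c)^2" using b d by (intro power_strict_mono) auto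
  then show ?thesis using b d by simp
qed

lemma delta_pos: "0 < delta" using c_sq_gt by simp

lemma delta_sq: "delta^2 = c^2 - 3*b*d" using c_sq_gt by simp

lemma delta_less: "delta < -c"
proof -
  have "delta < sqrt (c^2)" using b d by (intro real_sqrt_less_mono) simp
  then show ?thesis using c_neg by simp
qed

lemma m_pos: "0 < m" unfolding xm_def using delta_less b by simp

lemma m_less_M: "m < M" unfolding xm_def xM_def using delta_pos b by (simp add: divide_strict_right_mono)

lemma M_pos: "0 < M" using m_pos m_less_M by simp

lemma slope_poly_factor: "b*x^2 + 2*c*x + 3*d = b*(x-m)*(x-M)"
proof -
  have "b*(x-m)*(x-M) = b*x^2 + 2*c*x + (c^2 - delta^2)/b"
    unfolding xm_def xM_def using b by (simp add: field_simps power2_eq_square)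
  also have "(c^2 - delta^2)/b = 3*d" using delta_sq b by simp
  finally show ?thesis ..
qed

lemma m_critical: "b*m^2 + 2*c*m + 3*d = 0" using slope_poly_factor[of m] by simp

lemma M_critical: "b*M^2 + 2*c*M + 3*d = 0" using slope_poly_factor[of M] by simp

lemma fixpoint_eq_tbar: "0 < s \<Longrightarrow> f s = s \<Longrightarrow> s = tbar"
  using tbar_unique by blast

lemma f_pos: "0 < x \<Longrightarrow> 0 < f x"
  unfolding phi_def using phi_numerator_pos[OF a b d c_gt_cminus] by simp

lemma isCont_f: "0 < x \<Longrightarrow> isCont f x" by (simp add: isCont_phi)

lemma isCont_ff: "0 < x \<Longrightarrow> isCont (\<lambda>z. f (f z)) x"
  by (rule isCont_o2[OF isCont_f isCont_f]) (simp_all add: f_pos)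

lemma continuous_on_f: "0 < l \<Longrightarrow> continuous_on {l..r} f"
  by (intro continuous_at_imp_continuous_on) (auto intro: isCont_f)

definition f' :: "real \<Rightarrow> real" where
  "f' y = - (b*(y-m)*(y-M)) / y^4"

lemma DERIV_f: "0 < x \<Longrightarrow> DERIV f x :> f' x"
  using DERIV_phi[of x a b c d] unfolding f'_def slope_poly_factor by simp

lemma f_strict_antimono_left:
  assumes "0 < x" "x < y" "y \<le> m"
  shows "f y < f x"
proof (rule DERIV_neg_imp_decreasing_open[OF assms(2)])
  fix z assume z: "x < z" "z < y"
  have "0 < (z-m)*(z-M)" using z assms m_less_M by (intro mult_neg_neg) auto
  then have "f' z < 0" unfolding f'_def using b z assms by (simp add: mult.assoc)
  then show "\<exists>l. DERIV f z :> l \<and> l < 0" using DERIV_f[of z] z assms by auto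
qed (use continuous_on_f assms in auto)

lemma f_antimono_left: "0 < x \<Longrightarrow> x \<le> y \<Longrightarrow> y \<le> m \<Longrightarrow> f y \<le> f x"
  using f_strict_antimono_left by (cases "x = y") (auto simp: less_imp_le)

lemma f_mono_mid:
  assumes "m \<le> x" "x \<le> y" "y \<le> M"
  shows "f x \<le> f y"
proof (rule DERIV_nonneg_imp_increasing_open[OF assms(2)])
  fix z assume z: "x < z" "z < y"
  have "(z-m)*(z-M) \<le> 0" using z assms by (intro mult_nonneg_nonpos) auto
  then have "b*((z-m)*(z-M)) \<le> 0" using b by (simp add: mult_nonneg_nonpos)
  then have "0 \<le> f' z" unfolding f'_def by (simp add: mult.assoc divide_nonpos_nonneg)
  then show "\<exists>l. DERIV f z :> l \<and> 0 \<le> l" using DERIV_f[of z] z assms m_pos by auto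
qed (use continuous_on_f assms m_pos in auto)

lemma f_antimono_right:
  assumes "M \<le> x" "x \<le> y"
  shows "f y \<le> f x"
proof (rule DERIV_nonpos_imp_decreasing_open[OF assms(2)])
  fix z assume z: "x < z" "z < y"
  have "0 \<le> (z-m)*(z-M)" using z assms m_less_M by (intro mult_nonneg_nonneg) auto
  then have "f' z \<le> 0" unfolding f'_def using b by (simp add: mult.assoc)
  then show "\<exists>l. DERIV f z :> l \<and> l \<le> 0" using DERIV_f[of z] z assms M_pos by auto
qed (use continuous_on_f assms M_pos in auto)

lemma f_m_pos: "0 < f m" using f_pos m_pos by simp

lemma f_m_less_tbar: "f m < tbar"
  using f_strict_antimono_left[OF tbar_pos tbar_less_m] tbar_fix by simp

lemma f_gt_tbar: "0 < x \<Longrightarrow> x < tbar \<Longrightarrow> tbar < f x"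
  using f_strict_antimono_left[of x tbar] tbar_less_m tbar_fix by simp

lemma tbar_less_ff_m: "tbar < f (f m)"
  using f_gt_tbar f_m_pos f_m_less_tbar by simp

lemma f_m_le_f: "0 < x \<Longrightarrow> x \<le> M \<Longrightarrow> f m \<le> f x"
  using f_antimono_left[of x m] f_mono_mid[of m x] m_pos by (cases "x \<le> m") auto

lemma f_less_self:
  assumes "tbar < x"
  shows "f x < x"
proof (rule less_self_beyond_fixpoints[of tbar])
  fix z assume "tbar < z"
  with tbar_pos have "0 < z" by linarith
  then show "isCont f z" by (rule isCont_f)
  show "f z \<noteq> z" using fixpoint_eq_tbar[OF \<open>0 < z\<close>] \<open>tbar < z\<close> by auto
qed (use assms eventually_less_self_if_tendsto[OF phi_tendsto_at_top] in auto)

lemma ff_less_self: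
  assumes "0 \<le> l" "\<And>z. l < z \<Longrightarrow> f (f z) \<noteq> z" "l < x"
  shows "f (f x) < x"
proof (rule less_self_beyond_fixpoints[of l])
  show "\<forall>\<^sub>F x in at_top. f (f x) < x"
    by (rule eventually_less_self_if_tendsto[OF isCont_tendsto_compose[OF isCont_f[OF a] phi_tendsto_at_top]])
  show "isCont (\<lambda>x. f (f x)) z" if "l < z" for z using that assms(1) isCont_ff by simp
qed (use assms in auto)

lemma ff_less_flip: "0 < x \<Longrightarrow> x \<le> m \<Longrightarrow> f (f x) < x \<Longrightarrow> f x < f (f (f x))"
  by (rule f_strict_antimono_left) (simp_all add: f_pos)

lemma ff_greater_flip: "0 < x \<Longrightarrow> x < f (f x) \<Longrightarrow> f (f x) \<le> m \<Longrightarrow> f (f (f x)) < f x"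
  by (rule f_strict_antimono_left)

lemma ff_greater_left:
  assumes "l \<le> m" and below_right: "\<And>z. f l < z \<Longrightarrow> f (f z) < z"
    and "0 < x" "x < l" "f (f x) \<noteq> x"
  shows "x < f (f x)"
proof (rule ccontr)
  assume "\<not> x < f (f x)"
  with assms(5) have "f (f x) < x" by simp
  then have "f x < f (f (f x))" using ff_less_flip assms(3,4,1) by simp
  moreover have "f l < f x" using f_strict_antimono_left[OF assms(3,4,1)] .
  ultimately show False using below_right[of "f x"] by simp
qed

section \<open>The invariant interval\<close>

lemma f_maps_I_if:
  assumes above_m: "\<And>x. m \<le> x \<Longrightarrow> x \<le> f (f m) \<Longrightarrow> f m \<le> f x"
  shows "f ` I \<subseteq> I"
proof
  fix y assume "y \<in> f ` I"
  then obtain x where x: "f m \<le> x" "x \<le> f (f m)" "y = f x" by auto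
  have "0 < x" using x f_m_pos by simp
  show "y \<in> I"
  proof (cases "x \<le> tbar")
    case True
    then have "f x \<le> f (f m)" "tbar \<le> f x"
      using f_antimono_left[OF f_m_pos x(1)] f_antimono_left[OF \<open>0 < x\<close> True] tbar_less_m tbar_fix
      by simp_all
    then show ?thesis using x f_m_less_tbar by simp
  next
    case False
    then have "f x < x" using f_less_self by simp
    moreover have "f m \<le> f x"
      using f_antimono_left[OF \<open>0 < x\<close>] above_m x by (cases "x \<le> m") auto
    ultimately show ?thesis using x by simp
  qed
qed

text \<open>\<open>\<phi>\<close> is a cubic polynomial in \<open>1/x\<close>; at a critical point \<open>z\<close> the difference
  \<open>\<phi> x - \<phi> z\<close> has a double root at \<open>1/x = 1/z\<close>.\<close>

lemma f_diff_at_critical: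
  assumes z: "z \<noteq> 0" "b*z^2 + 2*c*z + 3*d = 0" and x: "x \<noteq> 0"
  shows "f x - f z = d * (1/x - 1/z)^2 * (1/x - (-c/d - 2/z))"
proof -
  have b_eq: "b = -(2*c*z + 3*d)/z^2" using z by (simp add: field_simps)
  show ?thesis
    unfolding phi_def b_eq using z x d by (simp add: field_simps power2_eq_square power3_eq_cube)
qed

lemma f_ge_at_critical:
  assumes z: "0 < z" "b*z^2 + 2*c*z + 3*d = 0" and x: "0 < x" "-c/d - 2/z \<le> 1/x"
  shows "f z \<le> f x"
proof -
  have "0 \<le> d * (1/x - 1/z)^2 * (1/x - (-c/d - 2/z))" using x d by simp
  then show ?thesis using f_diff_at_critical[of z x] z x by simp
qed

lemma c_le_c1_iff: "c \<le> - 2 * sqrt (b*d) \<longleftrightarrow> 0 \<le> c*m + 2*d"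
proof -
  have "sqrt (4*(b*d)) = 2 * sqrt (b*d)" by (simp add: real_sqrt_mult)
  then have "c \<le> - 2 * sqrt (b*d) \<longleftrightarrow> sqrt (4*(b*d)) \<le> sqrt (c^2)"
    using c_neg by auto
  also have "\<dots> \<longleftrightarrow> 4*(b*d) \<le> c^2" by (rule real_sqrt_le_iff)
  also have "\<dots> \<longleftrightarrow> 0 \<le> (b*d)*(c^2 - 4*(b*d))"
    using mult_le_cancel_left_pos[OF mult_pos_pos[OF b d], of 0 "c^2 - 4*(b*d)"] by simp
  also have "(b*d)*(c^2 - 4*(b*d)) = ((-c)*delta)^2 - (c^2 - 2*b*d)^2"
    using delta_sq by (simp add: power_mult_distrib algebra_simps power2_eq_square)
  also have "0 \<le> ((-c)*delta)^2 - (c^2 - 2*b*d)^2 \<longleftrightarrow> c^2 - 2*b*d \<le> (-c)*delta"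
  proof -
    have "0 \<le> c^2 - 2*b*d" using c_sq_gt mult_pos_pos[OF b d] by linarith
    moreover have "0 \<le> (-c)*delta" using c_neg delta_pos by (simp add: mult_nonpos_nonneg)
    ultimately show ?thesis using power_mono_iff[of "c^2 - 2*b*d" "(-c)*delta" 2] by simp
  qed
  also have "\<dots> \<longleftrightarrow> 0 \<le> b*(c*m + 2*d)"
  proof -
    have "b*(c*m + 2*d) = (-c)*delta - (c^2 - 2*b*d)"
      unfolding xm_def using b by (simp add: field_simps power2_eq_square)
    then show ?thesis by simp
  qed
  finally show ?thesis using b by (simp add: zero_le_mult_iff)
qed

lemma f_m_le_f_if_c_le_c1:
  assumes "c \<le> - 2 * sqrt (b*d)" "0 < x"
  shows "f m \<le> f x"
proof (rule f_ge_at_critical[OF m_pos m_critical \<open>0 < x\<close>])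
  have "-c/d - 2/m = -(c*m + 2*d)/(d*m)" using d m_pos by (simp add: field_simps)
  also have "\<dots> \<le> 0"
    using assms(1) c_le_c1_iff d m_pos by (simp add: divide_nonpos_pos)
  also have "0 \<le> 1/x" using assms by simp
  finally show "-c/d - 2/m \<le> 1/x" .
qed

text \<open>\<open>-d m/(c m + 2d)\<close> is the point \<open>\<eta>\<close> with \<open>1/\<eta> = -c/d - 2/m\<close>, the other solution of
  \<open>\<phi> x = \<phi> m\<close>; it is positive exactly when \<open>c > c\<^sub>1\<close>.\<close>

lemma inverse_eta_eq:
  assumes "z > 0" "c*z + 2*d < 0"
  shows "1 / (- d * z / (c * z + 2 * d)) = -c/d - 2/z"
  using assms d by (simp add: field_simps)

lemma f_m_le_f_below_eta:
  assumes "- 2 * sqrt (b*d) < c" "0 < x" "x \<le> - d * m / (c * m + 2 * d)"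
  shows "f m \<le> f x"
proof (rule f_ge_at_critical[OF m_pos m_critical \<open>0 < x\<close>])
  have "c*m + 2*d < 0" using assms(1) c_le_c1_iff by simp
  have "1 / (- d * m / (c * m + 2 * d)) \<le> 1 / x"
    by (rule frac_le) (use assms in simp_all)
  then show "-c/d - 2/m \<le> 1/x"
    using inverse_eta_eq[OF m_pos \<open>c*m + 2*d < 0\<close>] by simp
qed

lemma invariant_interval:
  assumes "c \<le> - 2 * sqrt (b * d) \<or> (- 2 * sqrt (b * d) < c \<and> f (f m) \<le> - d * m / (c * m + 2 * d))"
  shows "f ` I \<subseteq> I"
proof (rule f_maps_I_if)
  fix x assume x: "m \<le> x" "x \<le> f (f m)"
  then have "0 < x" using m_pos by simp
  show "f m \<le> f x"
  proof (cases "c \<le> - 2 * sqrt (b * d)")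
    case True
    then show ?thesis using f_m_le_f_if_c_le_c1 \<open>0 < x\<close> by blast
  next
    case False
    with assms x have "- 2 * sqrt (b * d) < c" "x \<le> - d * m / (c * m + 2 * d)" by auto
    then show ?thesis using f_m_le_f_below_eta \<open>0 < x\<close> by blast
  qed
qed

lemma f_maps_I_if_ff_m_le_m:
  assumes "f (f m) \<le> m"
  shows "f ` I \<subseteq> I"
proof (rule f_maps_I_if)
  fix x assume "m \<le> x" "x \<le> f (f m)"
  with assms have "x = m" by simp
  then show "f m \<le> f x" by simp
qed

lemma ff_mono_on_I:
  assumes "f (f m) \<le> m"
  shows "mono_on I (\<lambda>x. f (f x))"
proof (rule mono_onI)
  fix x y assume xy: "x \<in> I" "y \<in> I" "x \<le> y"
  have "0 < x" "y \<le> m" using xy f_m_pos assms by auto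
  then have fy_le: "f y \<le> f x" using f_antimono_left xy(3) by blast
  have "f x \<in> I" "f y \<in> I" using xy f_maps_I_if_ff_m_le_m[OF assms] by blast+
  then have "0 < f y" "f x \<le> m" using f_m_pos assms by auto
  then show "f (f x) \<le> f (f y)" using f_antimono_left fy_le by blast
qed

lemma continuous_on_ff: "0 < l \<Longrightarrow> continuous_on {l..u} (\<lambda>x. f (f x))"
  by (intro continuous_at_imp_continuous_on) (auto intro: isCont_ff)

section \<open>Preimages of the equilibrium\<close>

lemma f_M_less_tbar:
  assumes "tbar < - d * M / (c * M + 2 * d)"
  shows "f M < tbar"
proof -
  have "c*M + 2*d < 0"
  proof (rule ccontr)
    assume "\<not> c*M + 2*d < 0"
    then have "- d * M / (c * M + 2 * d) \<le> 0" using d M_pos by (simp add: divide_nonpos_nonneg)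
    then show False using assms tbar_pos by simp
  qed
  have "1 / (- d * M / (c * M + 2 * d)) < 1 / tbar"
    by (rule frac_less2) (use assms tbar_pos in simp_all)
  then have "-c/d - 2/M < 1/tbar"
    using inverse_eta_eq[OF M_pos \<open>c*M + 2*d < 0\<close>] by simp
  moreover have "1/tbar - 1/M \<noteq> 0" using tbar_less_m m_less_M by simp
  ultimately have "0 < f tbar - f M"
    using f_diff_at_critical[OF _ M_critical, of tbar] M_pos tbar_pos d by simp
  then show ?thesis using tbar_fix by simp
qed

lemma tbar_only_preimage:
  assumes fM: "f M < tbar" and y: "0 < y" "f y = tbar"
  shows "y = tbar"
proof -
  consider "y \<le> m" | "m \<le> y" "y \<le> M" | "M \<le> y" by linarith
  then show ?thesis
  proof cases
    case 1
    then show ?thesis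
      using f_strict_antimono_left[of y tbar] f_strict_antimono_left[of tbar y] y tbar_pos
        tbar_less_m tbar_fix by (cases y tbar rule: linorder_cases) auto
  qed (use f_mono_mid[of y M] f_antimono_right[of M y] fM y in auto)
qed

lemma backward_orbit_trivial:
  assumes "f M < tbar"
  shows "{s. 0 < s \<and> (\<exists>n. (f ^^ n) s = tbar)} = {tbar}"
proof -
  have "y = tbar" if "0 < y" "(f ^^ n) y = tbar" for n y
    using that
  proof (induction n arbitrary: y)
    case (Suc n)
    then have "f y = tbar" using f_pos by (simp add: funpow_Suc_right del: funpow.simps)
    then show ?case using tbar_only_preimage assms Suc.prems by blast
  qed simp
  moreover have "(f ^^ 0) tbar = tbar" by simp
  ultimately show ?thesis using tbar_pos by blast
qed

section \<open>The sign of \<open>\<phi> \<circ> \<phi> - id\<close> near a two-cycle\<close>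

definition slope_poly :: "real \<Rightarrow> real" where
  "slope_poly y = b*y^2 + 2*c*y + 3*d"

text \<open>On \<open>(0, x\<^sub>m)\<close>, \<open>B = (-\<phi>')\<^bsup>-1/2\<^esup>\<close>; then \<open>(\<phi> \<circ> \<phi>)' = 1/K\<^sup>2\<close> with
  \<open>K = (B \<circ> \<phi>) \<cdot> B\<close>, and \<open>K\<close> is convex wherever \<open>x\<close> and \<open>\<phi> x\<close> both lie in
  \<open>(0, x\<^sub>m)\<close>.\<close>

definition B :: "real \<Rightarrow> real" where
  "B y = y^2 / sqrt (slope_poly y)"

definition B' :: "real \<Rightarrow> real" where
  "B' y = (b*y^3 + 3*c*y^2 + 6*d*y) / sqrt (slope_poly y) ^ 3"

definition B'' :: "real \<Rightarrow> real" where
  "B'' y = 3*((c^2 - b*d)*y^2 + 4*c*d*y + 6*d^2) / sqrt (slope_poly y) ^ 5"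

lemma slope_poly_pos: "0 < y \<Longrightarrow> y < m \<Longrightarrow> 0 < slope_poly y"
  unfolding slope_poly_def slope_poly_factor using b m_less_M
  by (simp add: mult.assoc mult_neg_neg)

lemma DERIV_sqrt_slope_poly:
  assumes "0 < y" "y < m"
  shows "DERIV (\<lambda>y. sqrt (slope_poly y)) y :> (b*y + c) / sqrt (slope_poly y)"
proof -
  have "DERIV slope_poly y :> 2*b*y + 2*c"
    unfolding slope_poly_def by (auto intro!: derivative_eq_intros simp: power2_eq_square)
  from DERIV_chain2[OF DERIV_real_sqrt[OF slope_poly_pos[OF assms]] this]
  show ?thesis
    by (rule DERIV_cong) (use slope_poly_pos[OF assms] in \<open>simp add: field_simps\<close>)
qed

lemma DERIV_B:
  assumes "0 < y" "y < m"
  shows "DERIV B y :> B' y"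
proof -
  define r where "r = sqrt (slope_poly y)"
  have "0 < r" "r * r = slope_poly y"
    using slope_poly_pos[OF assms] by (simp_all add: r_def)
  have "DERIV (\<lambda>y. y^2 / sqrt (slope_poly y)) y :> ((2*y) * r - y^2 * ((b*y + c) / r)) / (r * r)"
    using DERIV_divide[OF DERIV_pow[of 2 y, simplified] DERIV_sqrt_slope_poly[OF assms]] \<open>0 < r\<close>
    by (simp add: r_def)
  moreover have "((2*y) * r - y^2 * ((b*y + c) / r)) / (r * r) = B' y"
  proof -
    have "((2*y) * r - y^2 * ((b*y + c) / r)) / (r * r) = (2*y*(r * r) - y^2*(b*y + c)) / r^3"
      using \<open>0 < r\<close> by (simp add: field_simps power3_eq_cube)
    also have "\<dots> = (b*y^3 + 3*c*y^2 + 6*d*y) / r^3"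
      unfolding \<open>r * r = slope_poly y\<close> slope_poly_def
      by (simp add: algebra_simps power2_eq_square power3_eq_cube)
    finally show ?thesis unfolding B'_def r_def .
  qed
  ultimately show ?thesis unfolding B_def by simp
qed

lemma DERIV_B':
  assumes "0 < y" "y < m"
  shows "DERIV B' y :> B'' y"
proof -
  define r where "r = sqrt (slope_poly y)"
  have "0 < r" "r * r = slope_poly y"
    using slope_poly_pos[OF assms] by (simp_all add: r_def)
  define N where "N y = b*y^3 + 3*c*y^2 + 6*d*y" for y
  have dN: "DERIV N y :> 3*b*y^2 + 6*c*y + 6*d"
    unfolding N_def by (auto intro!: derivative_eq_intros simp: power2_eq_square)
  have dr3: "DERIV (\<lambda>y. sqrt (slope_poly y) ^ 3) y :> 3 * r^2 * ((b*y + c) / r)"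
    using DERIV_chain2[OF DERIV_pow DERIV_sqrt_slope_poly[OF assms], of 3] by (simp add: r_def)
  have "DERIV (\<lambda>y. N y / sqrt (slope_poly y) ^ 3) y :>
      ((3*b*y^2 + 6*c*y + 6*d) * r^3 - N y * (3 * r^2 * ((b*y + c) / r))) / (r^3 * r^3)"
    using DERIV_divide[OF dN dr3] \<open>0 < r\<close> by (simp add: r_def)
  moreover have "((3*b*y^2 + 6*c*y + 6*d) * r^3 - N y * (3 * r^2 * ((b*y + c) / r))) / (r^3 * r^3)
      = B'' y"
  proof -
    have "((3*b*y^2 + 6*c*y + 6*d) * r^3 - N y * (3 * r^2 * ((b*y + c) / r))) / (r^3 * r^3)
        = ((3*b*y^2 + 6*c*y + 6*d) * (r * r) - 3 * N y * (b*y + c)) / r^5"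
      using \<open>0 < r\<close> by (simp add: field_simps power2_eq_square power3_eq_cube numeral_eq_Suc)
    also have "\<dots> = 3*((c^2 - b*d)*y^2 + 4*c*d*y + 6*d^2) / r^5"
      unfolding \<open>r * r = slope_poly y\<close> slope_poly_def N_def
      by (simp add: algebra_simps power2_eq_square power3_eq_cube)
    finally show ?thesis unfolding B''_def r_def .
  qed
  ultimately show ?thesis unfolding B'_def N_def by simp
qed

lemma B''_pos:
  assumes "0 < y" "y < m"
  shows "0 < B'' y"
proof -
  have "0 < c^2 - b*d" using c_sq_gt mult_pos_pos[OF b d] by linarith
  have "0 < 2*d^2*(c^2 - 3*b*d)" using d c_sq_gt by simp
  then have "0 < ((c^2 - b*d)*y + 2*c*d)^2 + 2*d^2*(c^2 - 3*b*d)"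
    by (intro add_nonneg_pos) simp_all
  also have "\<dots> = (c^2 - b*d) * ((c^2 - b*d)*y^2 + 4*c*d*y + 6*d^2)"
    by (simp add: algebra_simps power2_eq_square)
  finally have "0 < (c^2 - b*d) * ((c^2 - b*d)*y^2 + 4*c*d*y + 6*d^2)" .
  with \<open>0 < c^2 - b*d\<close> have "0 < (c^2 - b*d)*y^2 + 4*c*d*y + 6*d^2"
    by (simp add: zero_less_mult_iff)
  then show ?thesis unfolding B''_def using slope_poly_pos[OF assms] by simp
qed

lemma B_pos: "0 < y \<Longrightarrow> y < m \<Longrightarrow> 0 < B y"
  unfolding B_def using slope_poly_pos by simp

lemma f'_eq_B:
  assumes "0 < y" "y < m"
  shows "f' y = - 1 / (B y)^2"
  unfolding f'_def B_def slope_poly_factor[symmetric] slope_poly_def[symmetric]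
  using slope_poly_pos[OF assms] assms by (simp add: field_simps power2_eq_square power4_eq_xxxx)

lemma DERIV_f_eq_B:
  assumes "0 < y" "y < m"
  shows "DERIV f y :> - 1 / (B y)^2"
  using DERIV_f[OF assms(1)] unfolding f'_eq_B[OF assms] .

definition K :: "real \<Rightarrow> real" where
  "K x = B (f x) * B x"

definition K' :: "real \<Rightarrow> real" where
  "K' x = - B' (f x) / B x + B (f x) * B' x"

definition K'' :: "real \<Rightarrow> real" where
  "K'' x = B'' (f x) / (B x)^3 + B (f x) * B'' x"

lemma DERIV_K:
  assumes x: "0 < x" "x < m" and fx: "0 < f x" "f x < m"
  shows "DERIV K x :> K' x"
proof -
  have "DERIV (\<lambda>x. B (f x) * B x) x :> B' (f x) * (- 1 / (B x)^2) * B x + B' x * B (f x)"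
    by (rule DERIV_mult[OF DERIV_chain2[OF DERIV_B[OF fx] DERIV_f_eq_B[OF x]] DERIV_B[OF x]])
  moreover have "B' (f x) * (- 1 / (B x)^2) * B x + B' x * B (f x) = K' x"
    unfolding K'_def using B_pos[OF x] by (simp add: field_simps power2_eq_square)
  ultimately show ?thesis unfolding K_def by simp
qed

lemma DERIV_K':
  assumes x: "0 < x" "x < m" and fx: "0 < f x" "f x < m"
  shows "DERIV K' x :> K'' x"
proof -
  have Bx: "0 < B x" using B_pos[OF x] .
  have d1: "DERIV (\<lambda>x. B' (f x)) x :> B'' (f x) * (- 1 / (B x)^2)"
    by (rule DERIV_chain2[OF DERIV_B'[OF fx] DERIV_f_eq_B[OF x]])
  have d2: "DERIV (\<lambda>x. B (f x)) x :> B' (f x) * (- 1 / (B x)^2)"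
    by (rule DERIV_chain2[OF DERIV_B[OF fx] DERIV_f_eq_B[OF x]])
  have "DERIV (\<lambda>x. - (B' (f x) / B x) + B (f x) * B' x) x :>
      - ((B'' (f x) * (- 1 / (B x)^2) * B x - B' (f x) * B' x) / (B x * B x))
      + (B' (f x) * (- 1 / (B x)^2) * B' x + B'' x * B (f x))"
    using Bx by (intro DERIV_add DERIV_minus DERIV_divide DERIV_mult d1 d2 DERIV_B[OF x] DERIV_B'[OF x])
      simp
  moreover have "- ((B'' (f x) * (- 1 / (B x)^2) * B x - B' (f x) * B' x) / (B x * B x))
      + (B' (f x) * (- 1 / (B x)^2) * B' x + B'' x * B (f x)) = K'' x"
    unfolding K''_def using Bx by (simp add: field_simps power2_eq_square power3_eq_cube)
  ultimately show ?thesis unfolding K'_def by simp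
qed

lemma K''_pos: "0 < x \<Longrightarrow> x < m \<Longrightarrow> 0 < f x \<Longrightarrow> f x < m \<Longrightarrow> 0 < K'' x"
  unfolding K''_def using B''_pos B_pos by (simp add: add_pos_pos)

lemma K_pos: "0 < x \<Longrightarrow> x < m \<Longrightarrow> 0 < f x \<Longrightarrow> f x < m \<Longrightarrow> 0 < K x"
  unfolding K_def using B_pos by simp

lemma DERIV_ff_minus_id:
  assumes "0 < x"
  shows "DERIV (\<lambda>z. f (f z) - z) x :> f' (f x) * f' x - 1"
  using DERIV_diff[OF DERIV_chain2[OF DERIV_f[OF f_pos[OF assms]] DERIV_f[OF assms]] DERIV_ident] .

lemma f'_ff_eq_K:
  assumes "0 < x" "x < m" "0 < f x" "f x < m"
  shows "f' (f x) * f' x = 1 / (K x)^2"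
  unfolding K_def f'_eq_B[OF assms(1,2)] f'_eq_B[OF assms(3,4)] by (simp add: power_mult_distrib)

lemma convex_on_K:
  assumes "\<And>z. z \<in> {x1..x2} \<Longrightarrow> 0 < z \<and> z < m \<and> 0 < f z \<and> f z < m"
  shows "convex_on {x1..x2} K"
proof (rule f''_ge0_imp_convex[where f' = K' and f'' = K''])
  fix z assume "z \<in> {x1..x2}"
  then have z: "0 < z" "z < m" "0 < f z" "f z < m" using assms by blast+
  show "DERIV K z :> K' z" using DERIV_K[OF z] .
  show "DERIV K' z :> K'' z" using DERIV_K'[OF z] .
  show "0 \<le> K'' z" using K''_pos[OF z] by simp
qed simp

lemma two_cycle_maps_between:
  assumes "0 < p" "q \<le> m" "f p = q" "f q = p" "p < x" "x < q"
  shows "p < f x \<and> f x < q"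
  using f_strict_antimono_left[of p x] f_strict_antimono_left[of x q] assms by simp

lemma K_less_one_iff:
  assumes "0 < x" "x < m" "0 < f x" "f x < m"
  shows "K x < 1 \<longleftrightarrow> 1 < f' (f x) * f' x"
  using f'_ff_eq_K[OF assms] K_pos[OF assms] one_less_inverse_square_iff by simp

lemma tbar_not_attracting_within_two_cycle:
  assumes cycle: "0 < p" "p < tbar" "tbar < q" "q \<le> m" "f p = q" "f q = p"
    and below_right: "\<And>x. tbar < x \<Longrightarrow> x < q \<Longrightarrow> f (f x) < x"
    and above_left: "\<And>x. p < x \<Longrightarrow> x < tbar \<Longrightarrow> x < f (f x)"
  shows False
proof -
  have dom: "0 < x" "x < m" "0 < f x" "f x < m" if "p < x" "x < q" for x
    using two_cycle_maps_between[OF cycle(1,4,5,6) that] that cycle by simp_all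
  define D where "D z = f (f z) - z" for z
  have D_deriv: "DERIV D x :> f' (f x) * f' x - 1" if "p \<le> x" for x
    unfolding D_def using DERIV_ff_minus_id that cycle(1) by simp
  define x1 where "x1 = (p + tbar) / 2"
  have "p < x1" "x1 < tbar" using cycle unfolding x1_def by simp_all
  then have "D p < D x1" using above_left[of x1] cycle unfolding D_def by simp
  moreover have "DERIV D x :> f' (f x) * f' x - 1" if "p \<le> x" "x \<le> x1" for x
    using D_deriv that by simp
  ultimately obtain \<xi>1 where \<xi>1: "p < \<xi>1" "\<xi>1 < x1" "0 < f' (f \<xi>1) * f' \<xi>1 - 1"
    by (rule exists_pos_deriv_if_increasing[OF \<open>p < x1\<close>])
  define x3 where "x3 = (tbar + q) / 2"
  have "tbar < x3" "x3 < q" using cycle unfolding x3_def by simp_all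
  then have "D x3 < D q" using below_right[of x3] cycle unfolding D_def by simp
  moreover have "DERIV D x :> f' (f x) * f' x - 1" if "x3 \<le> x" "x \<le> q" for x
    using D_deriv that \<open>tbar < x3\<close> cycle by simp
  ultimately obtain \<xi>2 where \<xi>2: "x3 < \<xi>2" "\<xi>2 < q" "0 < f' (f \<xi>2) * f' \<xi>2 - 1"
    by (rule exists_pos_deriv_if_increasing[OF \<open>x3 < q\<close>])
  have "p < \<xi>1" "\<xi>1 < q" "p < \<xi>2" "\<xi>2 < q"
    using \<xi>1 \<xi>2 \<open>x1 < tbar\<close> \<open>tbar < x3\<close> cycle by simp_all
  then have "K \<xi>1 < 1" "K \<xi>2 < 1"
    using K_less_one_iff[OF dom] \<xi>1(3) \<xi>2(3) by simp_all
  have "DERIV D tbar :> f' (f tbar) * f' tbar - 1" using D_deriv cycle by simp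
  then have "f' (f tbar) * f' tbar - 1 \<le> 0"
    by (rule deriv_nonpos_at_zero_if_neg_right[of D _ _ q])
       (use below_right cycle tbar_fix in \<open>simp_all add: D_def\<close>)
  moreover have "p < tbar" "tbar < q" using cycle by simp_all
  ultimately have "1 \<le> K tbar" using K_less_one_iff[OF dom, of tbar] by simp
  moreover have "convex_on {\<xi>1..\<xi>2} K"
    by (rule convex_on_K) (use dom \<open>p < \<xi>1\<close> \<open>\<xi>2 < q\<close> in auto)
  then have "K tbar \<le> max (K \<xi>1) (K \<xi>2)"
    using convex_on_le_max \<xi>1 \<xi>2 \<open>x1 < tbar\<close> \<open>tbar < x3\<close> by simp
  ultimately show False using \<open>K \<xi>1 < 1\<close> \<open>K \<xi>2 < 1\<close> by simp
qed

lemma two_cycle_ff_gt_right: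
  assumes cycle: "0 < p" "p < tbar" "tbar < q" "q \<le> m" "f p = q" "f q = p"
    and no_fix: "\<And>x. p < x \<Longrightarrow> x < q \<Longrightarrow> x \<noteq> tbar \<Longrightarrow> f (f x) \<noteq> x"
    and x: "tbar < x" "x < q"
  shows "x < f (f x)"
proof (rule ccontr)
  assume "\<not> x < f (f x)"
  with no_fix[of x] x cycle have "f (f x) - x < 0" by auto
  have cont: "isCont (\<lambda>z. f (f z) - z) z" if "tbar < z" for z
    using isCont_ff[of z] that tbar_pos by (simp add: continuous_intros)
  have nonzero: "f (f z) - z \<noteq> 0" if "tbar < z" "z < q" for z
    using no_fix[of z] that cycle by simp
  have below_right: "f (f y) < y" if "tbar < y" "y < q" for y
    using neg_if_continuous_nonzero[of tbar q "\<lambda>z. f (f z) - z", OF cont nonzero x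
        \<open>f (f x) - x < 0\<close> that] by simp
  have "y < f (f y)" if "p < y" "y < tbar" for y
  proof (rule ccontr)
    assume "\<not> y < f (f y)"
    with no_fix[of y] that cycle have "f (f y) < y" by auto
    then have "f y < f (f (f y))" using ff_less_flip that cycle by simp
    moreover have "tbar < f y" "f y < q"
      using f_gt_tbar two_cycle_maps_between[OF cycle(1,4,5,6)] that cycle by auto
    ultimately show False using below_right[of "f y"] by simp
  qed
  with tbar_not_attracting_within_two_cycle[OF cycle below_right] show False by blast
qed

lemma two_cycle_ff_lt_left:
  assumes cycle: "0 < p" "p < tbar" "tbar < q" "q \<le> m" "f p = q" "f q = p"
    and no_fix: "\<And>x. p < x \<Longrightarrow> x < q \<Longrightarrow> x \<noteq> tbar \<Longrightarrow> f (f x) \<noteq> x"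
    and x: "p < x" "x < tbar"
  shows "f (f x) < x"
proof (rule ccontr)
  note maps = two_cycle_maps_between[OF cycle(1,4,5,6)]
  assume "\<not> f (f x) < x"
  with no_fix[of x] x cycle have "x < f (f x)" by auto
  moreover have "f (f x) \<le> m" using maps[of x] maps[of "f x"] x cycle by simp
  ultimately have "f (f (f x)) < f x" using ff_greater_flip x cycle by simp
  moreover have "tbar < f x" "f x < q" using f_gt_tbar maps x cycle by auto
  ultimately show False using two_cycle_ff_gt_right[OF cycle no_fix, of "f x"] by simp
qed

end

section \<open>Orbits\<close>

locale equilibrium_orbit = unique_equilibrium +
  fixes t :: "nat \<Rightarrow> real"
  assumes t0_pos: "0 < t 0" and t_Suc: "\<And>n. t (Suc n) = f (t n)"
begin

lemma t_pos: "0 < t n"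
  by (induction n) (simp_all add: t0_pos t_Suc f_pos)

lemma t_eq_funpow: "t n = (f ^^ n) (t 0)"
  by (induction n) (simp_all add: t_Suc)

lemma not_eventually_above_m: "\<not> (\<forall>n\<ge>N. m < t n)"
proof
  assume above: "\<forall>n\<ge>N. m < t n"
  define s where "s k = t (N + k)" for k
  have s_above: "m < s k" for k using above s_def by simp
  have "s (Suc k) \<le> s k" for k
    using f_less_self[of "s k"] s_above[of k] tbar_less_m by (simp add: s_def t_Suc)
  then have "decseq s" by (rule decseq_SucI)
  then obtain L where L: "s \<longlonglongrightarrow> L"
    using decseq_convergent[of s m] s_above by (meson less_imp_le)
  have "m \<le> L" using LIMSEQ_le_const[OF L] s_above by (simp add: less_imp_le)
  then have "0 < L" using m_pos by simp
  have "(\<lambda>k. f (s k)) \<longlonglongrightarrow> f L" using isCont_tendsto_compose[OF isCont_f[OF \<open>0 < L\<close>] L] .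
  moreover have "(\<lambda>k. f (s k)) \<longlonglongrightarrow> L" using LIMSEQ_Suc[OF L] by (simp add: s_def t_Suc)
  ultimately have "f L = L" by (rule LIMSEQ_unique)
  then have "L = tbar" using fixpoint_eq_tbar \<open>0 < L\<close> by blast
  with \<open>m \<le> L\<close> tbar_less_m show False by simp
qed

lemma t_stays_in_I:
  assumes "f ` I \<subseteq> I" "t n \<in> I"
  shows "t (n + k) \<in> I"
proof (induction k)
  case (Suc k)
  show ?case using subsetD[OF assms(1) imageI[OF Suc.IH]] by (simp add: t_Suc)
qed (use assms in simp)

lemma eventually_in_I:
  assumes inv: "f ` I \<subseteq> I" and above_f_m: "\<And>n. N \<le> n \<Longrightarrow> f m \<le> t n"
  shows "\<exists>N'. \<forall>n\<ge>N'. t n \<in> I"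
proof (cases "\<exists>n\<ge>N. t n \<in> I")
  case True
  then obtain n where "t n \<in> I" by blast
  then have "t k \<in> I" if "n \<le> k" for k
    using t_stays_in_I[OF inv, of n "k - n"] that by simp
  then show ?thesis by blast
next
  case False
  have above_ff_m: "f (f m) < t n" if "N \<le> n" for n
  proof -
    have "t n \<notin> I" using False that by blast
    with above_f_m[OF that] show ?thesis by auto
  qed
  obtain n where n: "N \<le> n" "t n \<le> m"
    using not_eventually_above_m[of N] by (auto simp: not_less)
  have "0 < f (f m)" using tbar_less_ff_m tbar_pos by linarith
  then have "f (t n) < f (f (f m))"
    using f_strict_antimono_left above_ff_m[OF n(1)] n(2) by blast
  also have "\<dots> < f (f m)" using f_less_self tbar_less_ff_m by simp
  finally have "t (Suc n) \<in> I"
    using f_antimono_left[OF t_pos n(2) order_refl] by (simp add: t_Suc less_imp_le)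
  moreover have "N \<le> Suc n" using n by simp
  ultimately show ?thesis using False by blast
qed

lemma t_stays_between_f_m_and_m:
  assumes "f (f m) \<le> m" "f m \<le> t j" "t j \<le> m"
  shows "f m \<le> t (j + k) \<and> t (j + k) \<le> m"
proof (induction k)
  case (Suc k)
  then have le: "f m \<le> t (j + k)" "t (j + k) \<le> m" by simp_all
  have "f m \<le> f (t (j + k))" using f_antimono_left[OF t_pos le(2) order_refl] .
  moreover have "f (t (j + k)) \<le> f (f m)" using f_antimono_left[OF f_m_pos le] .
  ultimately show ?case using assms(1) by (simp add: t_Suc)
qed (use assms in simp)

lemma t_le_after_excursion:
  assumes above_m: "\<And>i. n < i \<Longrightarrow> i < j \<Longrightarrow> m < t i" and "n < l" "l < j"
  shows "t l \<le> t (Suc n)"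
  using assms(2,3)
proof (induction l)
  case (Suc l)
  show ?case
  proof (cases "l = n")
    case False
    with Suc.prems have "n < l" by simp
    with Suc.prems have "f (t l) < t l"
      using f_less_self above_m[of l] tbar_less_m by simp
    with Suc.IH \<open>n < l\<close> Suc.prems show ?thesis by (simp add: t_Suc)
  qed simp
qed simp

lemma first_return_below_f_m:
  assumes ff_m_le_m: "f (f m) \<le> m" and "n < k" "t n < f m" "t k < f m"
  obtains j where "n < j" "j \<le> k" "t j < f m" "M < f (t n)" "f (f (t n)) \<le> t j"
proof -
  define j where "j = (LEAST j. n < j \<and> t j \<le> m)"
  have Pk: "n < k \<and> t k \<le> m" using assms f_m_less_tbar tbar_less_m by simp
  have j: "n < j" "t j \<le> m" using LeastI[of "\<lambda>j. n < j \<and> t j \<le> m" k, OF Pk] unfolding j_def by simp_all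
  have "j \<le> k" unfolding j_def using Pk by (rule Least_le)
  have above_m: "m < t i" if "n < i" "i < j" for i
  proof -
    have "\<not> (n < i \<and> t i \<le> m)"
      using not_less_Least[of i "\<lambda>j. n < j \<and> t j \<le> m"] that(2) unfolding j_def by blast
    with that(1) show ?thesis by simp
  qed
  have "t j < f m"
  proof (rule ccontr)
    assume "\<not> t j < f m"
    then have "f m \<le> t (j + (k - j))" using t_stays_between_f_m_and_m[OF ff_m_le_m _ j(2)] by simp
    with \<open>j \<le> k\<close> \<open>t k < f m\<close> show False by simp
  qed
  moreover have "tbar < t (Suc n)"
    using f_gt_tbar[OF t_pos] \<open>t n < f m\<close> f_m_less_tbar by (simp add: t_Suc)
  ultimately have "j \<noteq> Suc n" using f_m_less_tbar by auto
  obtain i where i: "j = Suc i" using j(1) by (cases j) simp_all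
  with j(1) \<open>j \<noteq> Suc n\<close> have "n < i" by simp
  then have "m < t i" "t i \<le> t (Suc n)"
    using above_m t_le_after_excursion[OF above_m] i by simp_all
  have "M < t i"
  proof (rule ccontr)
    assume "\<not> M < t i"
    then have "f m \<le> t j" using f_m_le_f[OF t_pos] i by (simp add: t_Suc)
    with \<open>t j < f m\<close> show False by simp
  qed
  then have "M < f (t n)" "f (f (t n)) \<le> t j"
    using \<open>t i \<le> t (Suc n)\<close> f_antimono_right[of "t i" "f (t n)"] i by (simp_all add: t_Suc)
  with that j(1) \<open>j \<le> k\<close> \<open>t j < f m\<close> show thesis by blast
qed

lemma returns_below_f_m_increase:
  assumes ff_m_le_m: "f (f m) \<le> m"
    and rises_below_f_m: "\<And>z. 0 < z \<Longrightarrow> z < f m \<Longrightarrow> z < f (f z)"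
  shows "n < k \<Longrightarrow> t n < f m \<Longrightarrow> t k < f m \<Longrightarrow> M < f (t n) \<and> f (f (t n)) \<le> t k"
proof (induction "k - n" arbitrary: n rule: less_induct)
  case less
  obtain j where j: "n < j" "j \<le> k" "t j < f m" "M < f (t n)" "f (f (t n)) \<le> t j"
    using first_return_below_f_m[OF ff_m_le_m less.prems] .
  show ?case
  proof (cases "j = k")
    case False
    then have "f (f (t j)) \<le> t k" using less.hyps[of j] j less.prems by simp
    moreover have "t j < f (f (t j))" using rises_below_f_m[OF t_pos j(3)] .
    ultimately show ?thesis using j by simp
  qed (use j in simp)
qed

lemma eventually_ge_f_m:
  assumes ff_m_le_m: "f (f m) \<le> m"
    and rises_below_f_m: "\<And>z. 0 < z \<Longrightarrow> z < f m \<Longrightarrow> z < f (f z)"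
  obtains N where "\<And>n. N \<le> n \<Longrightarrow> f m \<le> t n"
proof (cases "finite {n. t n < f m}")
  case True
  then obtain N where N: "\<forall>n\<in>{n. t n < f m}. n < N"
    unfolding finite_nat_set_iff_bounded by blast
  have "f m \<le> t n" if "N \<le> n" for n
    using N that by (meson mem_Collect_eq not_le order_less_le_trans less_irrefl)
  then show thesis by (rule that)
next
  case False
  then obtain r :: "nat \<Rightarrow> nat" where r: "strict_mono r" "\<And>j. t (r j) < f m"
    using infinite_enumerate by blast
  define z where "z j = t (r j)" for j
  have z_below: "z j < f m" for j unfolding z_def by (rule r(2))
  have step: "M < f (z j) \<and> f (f (z j)) \<le> z (Suc j)" for j
    unfolding z_def
    by (rule returns_below_f_m_increase[OF assms strict_monoD[OF r(1) lessI] r(2) r(2)])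
  have z_pushed: "z j < f (f (z j))" for j
    using rises_below_f_m[OF _ z_below] t_pos unfolding z_def by blast
  have "z j \<le> z (Suc j)" for j using z_pushed[of j] step[of j] by linarith
  then have "incseq z" by (rule incseq_SucI)
  then obtain L where L: "z \<longlonglongrightarrow> L" "\<And>i. z i \<le> L"
    using incseq_convergent[of z "f m"] z_below less_imp_le by blast
  have "L \<le> f m" using LIMSEQ_le_const2[OF L(1)] z_below less_imp_le by blast
  have "0 < L" using L(2)[of 0] t_pos[of "r 0"] unfolding z_def by linarith
  then have "0 < f L" by (rule f_pos)
  have fz: "(\<lambda>j. f (z j)) \<longlonglongrightarrow> f L"
    using isCont_tendsto_compose[OF isCont_f[OF \<open>0 < L\<close>] L(1)] .
  have ffz: "(\<lambda>j. f (f (z j))) \<longlonglongrightarrow> f (f L)"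
    using isCont_tendsto_compose[OF isCont_f[OF \<open>0 < f L\<close>] fz] .
  have "M \<le> f L" using LIMSEQ_le_const[OF fz, of M] step less_imp_le by blast
  moreover have "f (f L) \<le> L" using LIMSEQ_le[OF ffz LIMSEQ_Suc[OF L(1)]] step by blast
  ultimately show thesis
  proof (cases "L < f m")
    case True
    with rises_below_f_m[OF \<open>0 < L\<close>] \<open>f (f L) \<le> L\<close> show thesis by simp
  next
    case False
    with \<open>L \<le> f m\<close> have "L = f m" by simp
    with \<open>M \<le> f L\<close> ff_m_le_m m_less_M show thesis by simp
  qed
qed

lemma even_orbit_converges:
  assumes ff_m_le_m: "f (f m) \<le> m"
    and "\<And>z. 0 < z \<Longrightarrow> z < f m \<Longrightarrow> z < f (f z)"
  obtains N L where "incseq (\<lambda>k. t (2*(N+k))) \<or> decseq (\<lambda>k. t (2*(N+k)))"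
    "L \<in> I" "f (f L) = L" "(\<lambda>n. t (2*n)) \<longlonglongrightarrow> L" "(\<lambda>n. t (2*n+1)) \<longlonglongrightarrow> f L"
proof -
  have inv: "f ` I \<subseteq> I" using f_maps_I_if_ff_m_le_m[OF ff_m_le_m] .
  have ff_maps: "(\<lambda>x. f (f x)) ` I \<subseteq> I"
  proof
    fix y assume "y \<in> (\<lambda>x. f (f x)) ` I"
    then obtain x where "x \<in> I" "y = f (f x)" by blast
    then show "y \<in> I" using subsetD[OF inv imageI[OF subsetD[OF inv imageI[OF \<open>x \<in> I\<close>]]]] by simp
  qed
  obtain N0 where "\<And>n. N0 \<le> n \<Longrightarrow> f m \<le> t n" using eventually_ge_f_m[OF assms] by blast
  then obtain N where N: "\<forall>n\<ge>N. t n \<in> I" using eventually_in_I[OF inv] by blast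
  define e where "e k = t (2*(N+k))" for k
  have e_Suc: "e (Suc k) = f (f (e k))" for k by (simp add: e_def t_Suc numeral_2_eq_2)
  have e0: "e 0 \<in> I" using N by (simp add: e_def)
  obtain L where L: "e \<longlonglongrightarrow> L" "L \<in> I" "f (f L) = L" "incseq e \<or> decseq e"
    using mono_iteration_converges[of "\<lambda>x. f (f x)" "f m" "f (f m)" e, OF ff_maps
        ff_mono_on_I[OF ff_m_le_m] continuous_on_ff[OF f_m_pos] e0 e_Suc] by blast
  have e_eq: "e = (\<lambda>k. t (2*(N+k)))" by (simp add: fun_eq_iff e_def)
  then have "e = (\<lambda>n. t (2*(n + N)))" by (simp add: add.commute)
  with L(1) have "(\<lambda>n. t (2*(n + N))) \<longlonglongrightarrow> L" by simp
  then have even: "(\<lambda>n. t (2*n)) \<longlonglongrightarrow> L" by (rule LIMSEQ_offset)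
  have "0 < L" using L(2) f_m_pos by simp
  have "(\<lambda>n. f (t (2*n))) \<longlonglongrightarrow> f L" using isCont_tendsto_compose[OF isCont_f[OF \<open>0 < L\<close>] even] .
  then have odd: "(\<lambda>n. t (2*n+1)) \<longlonglongrightarrow> f L" by (simp add: t_Suc)
  from L(4) have mono: "incseq (\<lambda>k. t (2*(N+k))) \<or> decseq (\<lambda>k. t (2*(N+k)))"
    unfolding e_eq .
  show thesis by (rule that[OF mono L(2) L(3) even odd])
qed

lemma eventually_in_I_if_c_le_c1:
  assumes "c \<le> - 2 * sqrt (b * d)"
  shows "\<exists>N. \<forall>n\<ge>N. t n \<in> I"
proof (rule eventually_in_I)
  show "f ` I \<subseteq> I" by (rule invariant_interval) (use assms in simp)
  show "f m \<le> t n" if n: "1 \<le> n" for n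
  proof -
    obtain k where "n = Suc k" using n by (cases n) simp_all
    then show ?thesis using f_m_le_f_if_c_le_c1[OF assms t_pos[of k]] by (simp add: t_Suc)
  qed
qed

lemma tendsto_tbar_if_no_two_cycle:
  assumes no_cycle: "\<nexists>p q. two_cycle f p q"
  shows "t \<longlonglongrightarrow> tbar"
proof -
  have no_fix: "f (f x) \<noteq> x" if "0 < x" "x \<noteq> tbar" for x
  proof
    assume "f (f x) = x"
    moreover have "f x \<noteq> x" using fixpoint_eq_tbar that by blast
    ultimately have "two_cycle f x (f x)" unfolding two_cycle_def using that f_pos by simp
    with no_cycle show False by blast
  qed
  have below_right: "f (f x) < x" if "tbar < x" for x
  proof (rule ff_less_self[of tbar])
    show "f (f z) \<noteq> z" if "tbar < z" for z using no_fix[of z] that tbar_pos by simp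
  qed (use that tbar_pos in simp_all)
  have "f (f m) \<le> m" using below_right[OF tbar_less_m] by simp
  moreover have "z < f (f z)" if "0 < z" "z < f m" for z
  proof (rule ff_greater_left[of tbar])
    show "f (f y) < y" if "f tbar < y" for y using below_right that tbar_fix by simp
    show "f (f z) \<noteq> z" using no_fix that f_m_less_tbar by simp
  qed (use that tbar_less_m f_m_less_tbar in simp_all)
  ultimately obtain N L where "incseq (\<lambda>k. t (2*(N+k))) \<or> decseq (\<lambda>k. t (2*(N+k)))"
    and L: "L \<in> I" "f (f L) = L" "(\<lambda>n. t (2*n)) \<longlonglongrightarrow> L" "(\<lambda>n. t (2*n+1)) \<longlonglongrightarrow> f L"
    by (rule even_orbit_converges)
  have "0 < L" using L(1) f_m_pos by simp
  with no_fix[of L] L(2) have "L = tbar" by blast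
  with L(3,4) tbar_fix have "(\<lambda>n. t (2*n)) \<longlonglongrightarrow> tbar" "(\<lambda>n. t (2*n+1)) \<longlonglongrightarrow> tbar"
    by simp_all
  then show ?thesis by (rule limseq_even_odd)
qed

lemma tendsto_tbar_if_preimage:
  assumes "t 0 \<in> {s. 0 < s \<and> (\<exists>n. (f ^^ n) s = tbar)}"
  shows "t \<longlonglongrightarrow> tbar"
proof -
  from assms obtain n where "(f ^^ n) (t 0) = tbar" by blast
  then have "t n = tbar" by (metis t_eq_funpow)
  then have "t (k + n) = tbar" for k by (induction k) (simp_all add: t_Suc tbar_fix)
  then have "(\<lambda>k. t (k + n)) \<longlonglongrightarrow> tbar" by simp
  then show ?thesis by (rule LIMSEQ_offset)
qed

end

section \<open>Orbits near a unique two-cycle\<close>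

locale two_cycle_orbit = equilibrium_orbit +
  fixes p q :: real
  assumes cycle: "two_cycle f p q" and p_less_tbar: "p < tbar" and tbar_less_q: "tbar < q"
    and q_le_m: "q \<le> m" and cycle_unique: "\<And>p' q'. two_cycle f p' q' \<Longrightarrow> {p', q'} = {p, q}"
begin

lemma p_pos: "0 < p" and f_p: "f p = q" and f_q: "f q = p"
  using cycle unfolding two_cycle_def by simp_all

lemma ff_fixpoints: "0 < x \<Longrightarrow> f (f x) = x \<Longrightarrow> x = tbar \<or> x = p \<or> x = q"
proof (cases "f x = x")
  case False
  assume "0 < x" "f (f x) = x"
  then have "two_cycle f x (f x)" unfolding two_cycle_def using False f_pos by simp
  then have "{x, f x} = {p, q}" by (rule cycle_unique)
  then have "x \<in> {p, q}" by (metis insertI1)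
  then show ?thesis by simp
qed (use fixpoint_eq_tbar in blast)

lemma ff_no_fix_between:
  assumes "p < x" "x < q" "x \<noteq> tbar"
  shows "f (f x) \<noteq> x"
proof
  assume "f (f x) = x"
  with assms p_pos have "x = tbar \<or> x = p \<or> x = q" by (intro ff_fixpoints) simp_all
  with assms show False by auto
qed

lemma ff_less_beyond_q:
  assumes "q < x"
  shows "f (f x) < x"
proof (rule ff_less_self[of q])
  fix z assume "q < z"
  show "f (f z) \<noteq> z"
  proof
    assume "f (f z) = z"
    with \<open>q < z\<close> p_pos p_less_tbar tbar_less_q have "z = tbar \<or> z = p \<or> z = q"
      by (intro ff_fixpoints) simp_all
    with \<open>q < z\<close> p_less_tbar tbar_less_q show False by auto
  qed
qed (use assms p_pos p_less_tbar tbar_less_q in simp_all)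

lemmas ff_gt_right = two_cycle_ff_gt_right[OF p_pos p_less_tbar tbar_less_q q_le_m f_p f_q ff_no_fix_between]
lemmas ff_lt_left = two_cycle_ff_lt_left[OF p_pos p_less_tbar tbar_less_q q_le_m f_p f_q ff_no_fix_between]

lemma even_limit_ne_tbar:
  assumes e_Suc: "\<And>k. e (Suc k) = f (f (e k))" and e_ne: "\<And>k. e k \<noteq> tbar"
    and mono: "incseq e \<or> decseq e" and lim: "e \<longlonglongrightarrow> tbar"
  shows False
  using mono
proof
  assume inc: "incseq e"
  have "e k \<le> p" for k
  proof (rule ccontr)
    assume "\<not> e k \<le> p"
    moreover have "e k < tbar" using incseq_le[OF inc lim, of k] e_ne[of k] by (simp add: less_le)
    ultimately have "e (Suc k) < e k" using ff_lt_left e_Suc by simp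
    with incseq_SucD[OF inc, of k] show False by simp
  qed
  then have "tbar \<le> p" using LIMSEQ_le_const2[OF lim] by blast
  with p_less_tbar show False by simp
next
  assume dec: "decseq e"
  have "q \<le> e k" for k
  proof (rule ccontr)
    assume "\<not> q \<le> e k"
    moreover have "tbar < e k" using decseq_ge[OF dec lim, of k] e_ne[of k] by (simp add: less_le)
    ultimately have "e k < e (Suc k)" using ff_gt_right e_Suc by simp
    with decseq_SucD[OF dec, of k] show False by simp
  qed
  then have "q \<le> tbar" using LIMSEQ_le_const[OF lim] by blast
  with tbar_less_q show False by simp
qed

lemma tendsto_two_cycle_if_not_preimage:
  assumes not_pre: "t 0 \<notin> {s. 0 < s \<and> (\<exists>n. (f ^^ n) s = tbar)}"
  shows "conv_two_cycle t p q"
proof -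
  have t_ne: "t n \<noteq> tbar" for n
  proof
    assume "t n = tbar"
    then have "(f ^^ n) (t 0) = tbar" by (metis t_eq_funpow)
    with t0_pos not_pre show False by blast
  qed
  have "0 < q" using tbar_pos tbar_less_q by simp
  then have "f m \<le> p" using f_antimono_left[OF _ q_le_m order_refl] f_q by simp
  have "f (f m) \<le> m"
  proof (cases "q = m")
    case False
    with q_le_m show ?thesis using ff_less_beyond_q[of m] by simp
  qed (use f_p f_q in simp)
  moreover have "z < f (f z)" if "0 < z" "z < f m" for z
  proof (rule ff_greater_left[of p])
    show "f (f y) < y" if "f p < y" for y using ff_less_beyond_q that f_p by simp
    show "f (f z) \<noteq> z"
    proof
      assume "f (f z) = z"
      with that have "z = tbar \<or> z = p \<or> z = q" by (intro ff_fixpoints) simp_all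
      with that \<open>f m \<le> p\<close> p_less_tbar tbar_less_q show False by auto
    qed
  qed (use that \<open>f m \<le> p\<close> p_less_tbar tbar_less_m in simp_all)
  ultimately obtain N L where mono: "incseq (\<lambda>k. t (2*(N+k))) \<or> decseq (\<lambda>k. t (2*(N+k)))"
    and L: "L \<in> I" "f (f L) = L" "(\<lambda>n. t (2*n)) \<longlonglongrightarrow> L" "(\<lambda>n. t (2*n+1)) \<longlonglongrightarrow> f L"
    by (rule even_orbit_converges)
  have "0 < L" using L(1) f_m_pos by simp
  have "L \<noteq> tbar"
  proof
    assume "L = tbar"
    have "(\<lambda>n. t (2*(n + N))) \<longlonglongrightarrow> tbar"
      using LIMSEQ_ignore_initial_segment[OF L(3), of N] \<open>L = tbar\<close> by simp
    then have lim: "(\<lambda>k. t (2*(N+k))) \<longlonglongrightarrow> tbar" by (simp add: add.commute)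
    have e_Suc: "t (2*(N + Suc k)) = f (f (t (2*(N+k))))" for k
      by (simp add: t_Suc numeral_2_eq_2)
    show False
      by (rule even_limit_ne_tbar[of "\<lambda>k. t (2*(N+k))", OF e_Suc t_ne mono lim])
  qed
  then have "L = p \<or> L = q" using ff_fixpoints[OF \<open>0 < L\<close> L(2)] by simp
  then show ?thesis
  proof
    assume "L = p"
    with L(3,4) f_p show ?thesis unfolding conv_two_cycle_def by simp
  next
    assume "L = q"
    with L(3,4) f_q show ?thesis unfolding conv_two_cycle_def by simp
  qed
qed

end

context equilibrium_orbit
begin

lemma unique_two_cycle_conclusions:
  assumes "two_cycle f p q \<and> p < tbar \<and> tbar < q \<and> q \<le> m
      \<and> (\<forall>p' q'. two_cycle f p' q' \<longrightarrow> {p', q'} = {p, q})"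
  shows "let S = {s. 0 < s \<and> (\<exists>n. (f ^^ n) s = tbar)} in
      (tbar < - d * M / (c * M + 2 * d) \<longrightarrow> S = {tbar})
    \<and> (t 0 \<notin> S \<longrightarrow> conv_two_cycle t p q)
    \<and> (t 0 \<in> S \<longrightarrow> t \<longlonglongrightarrow> tbar)"
proof -
  interpret two_cycle_orbit a b c d tbar t p q
  proof (intro two_cycle_orbit.intro two_cycle_orbit_axioms.intro equilibrium_orbit_axioms)
    show "{p', q'} = {p, q}" if "two_cycle f p' q'" for p' q' using assms that by blast
  qed (use assms in simp_all)
  show ?thesis
    unfolding Let_def
  proof (intro conjI impI)
    show "{s. 0 < s \<and> (\<exists>n. (f ^^ n) s = tbar)} = {tbar}" if "tbar < - d * M / (c * M + 2 * d)"
      using backward_orbit_trivial[OF f_M_less_tbar[OF that]] .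
    show "conv_two_cycle t p q" if "t 0 \<notin> {s. 0 < s \<and> (\<exists>n. (f ^^ n) s = tbar)}"
      using tendsto_two_cycle_if_not_preimage[OF that] .
    show "t \<longlonglongrightarrow> tbar" if "t 0 \<in> {s. 0 < s \<and> (\<exists>n. (f ^^ n) s = tbar)}"
      using tendsto_tbar_if_preimage[OF that] .
  qed
qed

end

theorem theorem6:
  fixes a b c d tbar :: real and t :: "nat \<Rightarrow> real"
  defines "f \<equiv> phi a b c d"
  defines "m \<equiv> xm b c d"
  defines "M \<equiv> xM b c d"
  defines "c1 \<equiv> - 2 * sqrt (b * d)"
  defines "I \<equiv> {f m .. f (f m)}"
  assumes abd: "a > 0" "b > 0" "d > 0"
    and crange: "cminus a b d < c" "c < - sqrt (3 * b * d)"
    and eq: "tbar > 0" "f tbar = tbar" "\<forall>s>0. f s = s \<longrightarrow> s = tbar" "tbar < m"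
    and sol: "t 0 > 0" "\<forall>n. t (Suc n) = f (t n)"
  shows
    "((c \<le> c1 \<or> (c > c1 \<and> f (f m) \<le> - d * m / (c * m + 2 * d))) \<longrightarrow> f ` I \<subseteq> I)
     \<and> (c \<le> c1 \<longrightarrow> (\<exists>N. \<forall>n\<ge>N. t n \<in> I))
     \<and> ((\<nexists>p q. two_cycle f p q) \<longrightarrow> t \<longlonglongrightarrow> tbar)
     \<and> (\<forall>p q. two_cycle f p q \<and> p < tbar \<and> tbar < q \<and> q \<le> m
          \<and> (\<forall>p' q'. two_cycle f p' q' \<longrightarrow> {p', q'} = {p, q}) \<longrightarrow>
          (let S = {s. s > 0 \<and> (\<exists>n. (f ^^ n) s = tbar)} in
             (tbar < - d * M / (c * M + 2 * d) \<longrightarrow> S = {tbar})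
           \<and> (t 0 \<notin> S \<longrightarrow> conv_two_cycle t p q)
           \<and> (t 0 \<in> S \<longrightarrow> t \<longlonglongrightarrow> tbar)))"
proof (intro conjI impI allI)
  interpret equilibrium_orbit a b c d tbar t
    by unfold_locales (fact abd crange eq(1) eq(2-4)[unfolded f_def m_def] sol(1)
        sol(2)[unfolded f_def, rule_format])+
  show "f ` I \<subseteq> I" if "c \<le> c1 \<or> (c > c1 \<and> f (f m) \<le> - d * m / (c * m + 2 * d))"
    using that unfolding f_def m_def c1_def I_def by (rule invariant_interval)
  show "\<exists>N. \<forall>n\<ge>N. t n \<in> I" if "c \<le> c1"
    using that unfolding f_def m_def c1_def I_def by (rule eventually_in_I_if_c_le_c1)
  show "t \<longlonglongrightarrow> tbar" if "\<nexists>p q. two_cycle f p q"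
    using that unfolding f_def by (rule tendsto_tbar_if_no_two_cycle)
  fix p q
  assume "two_cycle f p q \<and> p < tbar \<and> tbar < q \<and> q \<le> m
    \<and> (\<forall>p' q'. two_cycle f p' q' \<longrightarrow> {p', q'} = {p, q})"
  then show "let S = {s. s > 0 \<and> (\<exists>n. (f ^^ n) s = tbar)} in
      (tbar < - d * M / (c * M + 2 * d) \<longrightarrow> S = {tbar})
    \<and> (t 0 \<notin> S \<longrightarrow> conv_two_cycle t p q)
    \<and> (t 0 \<in> S \<longrightarrow> t \<longlonglongrightarrow> tbar)"
    unfolding f_def m_def M_def by (rule unique_two_cycle_conclusions)
qed

end
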